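(* Let $G$ be a simple graph with $\min\{\delta(G),\delta(G^c)\}\ge4$ and $|V(G)|\ge 26$. If $G$ has an edge-cut of size at most $3$, then $G^c\in\mathcal{S}_3$.
   Context: $G^c$ is the complement of $G$. $G\in\mathcal{S}_3$ means: for every $\beta:V(G)\to\mathbb{Z}_3$ with $\sum_v\beta(v)\equiv0\pmod3$ there is a strongly-connected orientation $D$ of $G$ with $d^+_D(v)-d^-_D(v)\equiv\beta(v)\pmod3$ for all $v$. *)

theory Defs
  imports Main
begin

definition simple_graph :: "'a set \<Rightarrow> ('a \<Rightarrow> 'a \<Rightarrow> bool) \<Rightarrow> bool" where
  "simple_graph V E \<longleftrightarrow> finite V \<and>
     (\<forall>u v. E u v \<longrightarrow> u \<in> V \<and> v \<in> V \<and> u \<noteq> v \<and> E v u)"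

definition compl_graph :: "'a set \<Rightarrow> ('a \<Rightarrow> 'a \<Rightarrow> bool) \<Rightarrow> ('a \<Rightarrow> 'a \<Rightarrow> bool)" where
  "compl_graph V E = (\<lambda>u v. u \<in> V \<and> v \<in> V \<and> u \<noteq> v \<and> \<not> E u v)"

definition degree :: "'a set \<Rightarrow> ('a \<Rightarrow> 'a \<Rightarrow> bool) \<Rightarrow> 'a \<Rightarrow> nat" where
  "degree V E v = card {w \<in> V. E v w}"

definition min_degree :: "'a set \<Rightarrow> ('a \<Rightarrow> 'a \<Rightarrow> bool) \<Rightarrow> nat" where
  "min_degree V E = Min (degree V E ` V)"

definition cut_edges :: "'a set \<Rightarrow> ('a \<Rightarrow> 'a \<Rightarrow> bool) \<Rightarrow> 'a set \<Rightarrow> ('a \<times> 'a) set" where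
  "cut_edges V E X = {(u, v). u \<in> X \<and> v \<in> V - X \<and> E u v}"

definition has_edge_cut_at_most :: "'a set \<Rightarrow> ('a \<Rightarrow> 'a \<Rightarrow> bool) \<Rightarrow> nat \<Rightarrow> bool" where
  "has_edge_cut_at_most V E k \<longleftrightarrow>
     (\<exists>X. X \<noteq> {} \<and> X \<subset> V \<and> card (cut_edges V E X) \<le> k)"

definition orientation :: "('a \<Rightarrow> 'a \<Rightarrow> bool) \<Rightarrow> ('a \<Rightarrow> 'a \<Rightarrow> bool) \<Rightarrow> bool" where
  "orientation E D \<longleftrightarrow> (\<forall>u v. D u v \<longrightarrow> E u v) \<and> (\<forall>u v. E u v \<longrightarrow> (D u v \<noteq> D v u))"

definition strongly_connected :: "'a set \<Rightarrow> ('a \<Rightarrow> 'a \<Rightarrow> bool) \<Rightarrow> bool" where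
  "strongly_connected V D \<longleftrightarrow> (\<forall>u\<in>V. \<forall>v\<in>V. (u, v) \<in> {(x, y). D x y}\<^sup>*)"

definition out_degree :: "'a set \<Rightarrow> ('a \<Rightarrow> 'a \<Rightarrow> bool) \<Rightarrow> 'a \<Rightarrow> nat" where
  "out_degree V D v = card {w \<in> V. D v w}"

definition in_degree :: "'a set \<Rightarrow> ('a \<Rightarrow> 'a \<Rightarrow> bool) \<Rightarrow> 'a \<Rightarrow> nat" where
  "in_degree V D v = card {w \<in> V. D w v}"

text \<open>G in S_3: every Z_3-boundary beta (represented by integers, read mod 3)
  is realised mod 3 by a strongly connected orientation.\<close>
definition in_S3 :: "'a set \<Rightarrow> ('a \<Rightarrow> 'a \<Rightarrow> bool) \<Rightarrow> bool" where
  "in_S3 V E \<longleftrightarrow> (\<forall>\<beta> :: 'a \<Rightarrow> int. (\<Sum>v\<in>V. \<beta> v) mod 3 = 0 \<longrightarrow>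
     (\<exists>D. orientation E D \<and> strongly_connected V D \<and>
        (\<forall>v\<in>V. (int (out_degree V D v) - int (in_degree V D v)) mod 3 = \<beta> v mod 3)))"

end

theory Submission
  imports Defs
begin

text \<open>
  Both sides of an edge cut of size at most three contain at least five vertices, because every
  vertex has degree at least four. With \<open>|V| \<ge> 26\<close> one then finds five vertices on one side
  and thirteen on the other with no edges of \<open>G\<close> between them, i.e.\ a copy of \<open>K(5,13)\<close>
  in \<open>G\<^sup>c\<close>. This \<open>K(5,13)\<close> lies in \<open>S\<^sub>3\<close> by an explicit family of orientations.
  Membership in \<open>S\<^sub>3\<close> survives adding edges and adding a vertex with at least four
  neighbours. Absorbing such vertices twice swallows the whole small side of the cut and all
  but at most one vertex of the other side, and that last vertex has all its (at least four)
  neighbours of \<open>G\<^sup>c\<close> already absorbed.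
\<close>

definition net_degree :: "'a set \<Rightarrow> ('a \<Rightarrow> 'a \<Rightarrow> bool) \<Rightarrow> 'a \<Rightarrow> int" where
  "net_degree V D v = int (out_degree V D v) - int (in_degree V D v)"

lemma in_S3I:
  assumes "\<And>\<beta>. (\<Sum>v\<in>V. \<beta> v) mod 3 = 0 \<Longrightarrow>
    \<exists>D. orientation E D \<and> strongly_connected V D \<and> (\<forall>v\<in>V. net_degree V D v mod 3 = \<beta> v mod 3)"
  shows "in_S3 V E"
  using assms unfolding in_S3_def net_degree_def by blast

lemma in_S3E:
  assumes "in_S3 V E" "(\<Sum>v\<in>V. \<beta> v) mod 3 = 0"
  obtains D where "orientation E D" "strongly_connected V D"
    "\<forall>v\<in>V. net_degree V D v mod 3 = \<beta> v mod 3"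
  using assms(1)[unfolded in_S3_def, rule_format, OF assms(2)] that
  unfolding net_degree_def by blast

lemma strongly_connected_mono:
  assumes "strongly_connected V D" "\<And>u v. D u v \<Longrightarrow> D' u v"
  shows "strongly_connected V D'"
proof -
  have "{(x, y). D x y} \<subseteq> {(x, y). D' x y}" using assms(2) by auto
  then show ?thesis using assms(1) rtrancl_mono unfolding strongly_connected_def by blast
qed

lemma strongly_connected_cycle:
  assumes "0 < n" "\<And>i. i < n \<Longrightarrow> R i (Suc i mod n)"
  shows "strongly_connected {..<n} R"
proof -
  let ?S = "{(x, y). R x y}\<^sup>*"
  have up: "(0, i) \<in> ?S" if "i < n" for i
    using that
  proof (induction i)
    case (Suc i)
    then have "R i (Suc i)" using assms(2)[of i] by simp
    then show ?case using Suc by (simp add: rtrancl_into_rtrancl)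
  qed simp
  have "(i, n - 1) \<in> ?S" if "i < n" for i
    using that
  proof (induction "n - 1 - i" arbitrary: i)
    case 0
    then have "i = n - 1" by simp
    then show ?case by simp
  next
    case (Suc d)
    then have "R i (Suc i)" using assms(2)[of i] by simp
    then show ?case using Suc(1)[of "Suc i"] Suc(2,3) by (simp add: converse_rtrancl_into_rtrancl)
  qed
  moreover have "(n - 1, 0) \<in> ?S" using assms(2)[of "n - 1"] assms(1) by auto
  ultimately have down: "(i, 0) \<in> ?S" if "i < n" for i
    using that rtrancl_trans by fast
  show ?thesis
    unfolding strongly_connected_def using up down rtrancl_trans by (metis lessThan_iff)
qed

lemma mod_eq_shift:
  fixes x x' y c :: int
  assumes "x mod m = (y - c) mod m" "x' = x + c"
  shows "x' mod m = y mod m"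
  using assms by (simp add: mod_eq_dvd_iff algebra_simps)

lemma net_degree_add_arc:
  assumes "finite V" "a \<in> V" "b \<in> V" "\<not> D a b"
  shows "net_degree V (\<lambda>u v. D u v \<or> u = a \<and> v = b) x
           = net_degree V D x + of_bool (x = a) - of_bool (x = b)"
proof -
  have "out_degree V (\<lambda>u v. D u v \<or> u = a \<and> v = b) x = out_degree V D x + of_bool (x = a)"
  proof (cases "x = a")
    case True
    then have "{w\<in>V. D x w \<or> x = a \<and> w = b} = insert b {w\<in>V. D x w}" using assms by auto
    then show ?thesis using True assms unfolding out_degree_def by simp
  qed (simp add: out_degree_def)
  moreover have "in_degree V (\<lambda>u v. D u v \<or> u = a \<and> v = b) x = in_degree V D x + of_bool (x = b)"
  proof (cases "x = b")
    case True
    then have "{w\<in>V. D w x \<or> w = a \<and> x = b} = insert a {w\<in>V. D w x}" using assms by auto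
    then show ?thesis using True assms unfolding in_degree_def by simp
  qed (simp add: in_degree_def)
  ultimately show ?thesis unfolding net_degree_def by simp
qed

lemma in_S3_add_edge:
  assumes S: "in_S3 V E" and "finite V" and ab: "a \<in> V" "b \<in> V" "a \<noteq> b" "\<not> E a b" "\<not> E b a"
  shows "in_S3 V (\<lambda>u v. E u v \<or> u = a \<and> v = b \<or> u = b \<and> v = a)"
proof (rule in_S3I)
  fix \<beta> :: "'a \<Rightarrow> int" assume sum: "(\<Sum>v\<in>V. \<beta> v) mod 3 = 0"
  define \<beta>' where "\<beta>' x = \<beta> x - of_bool (x = a) + of_bool (x = b)" for x
  have "(\<Sum>v\<in>V. \<beta>' v) = (\<Sum>v\<in>V. \<beta> v)"
    using assms unfolding \<beta>'_def by (simp add: sum.distrib sum_subtractf)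
  then obtain D where D: "orientation E D" "strongly_connected V D"
    "\<forall>v\<in>V. net_degree V D v mod 3 = \<beta>' v mod 3"
    using in_S3E[OF S] sum by metis
  have "\<not> D a b" using D(1) ab unfolding orientation_def by blast
  define D' where "D' u v \<longleftrightarrow> D u v \<or> u = a \<and> v = b" for u v
  have "orientation (\<lambda>u v. E u v \<or> u = a \<and> v = b \<or> u = b \<and> v = a) D'"
    using D(1) ab unfolding orientation_def D'_def by blast
  moreover have "strongly_connected V D'"
    using D(2) by (rule strongly_connected_mono) (simp add: D'_def)
  moreover have "net_degree V D' v mod 3 = \<beta> v mod 3" if "v \<in> V" for v
  proof (rule mod_eq_shift)
    show "net_degree V D v mod 3 = (\<beta> v - (of_bool (v = a) - of_bool (v = b))) mod 3"
      using D(3) that unfolding \<beta>'_def by (simp add: algebra_simps)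
    show "net_degree V D' v = net_degree V D v + (of_bool (v = a) - of_bool (v = b))"
      using net_degree_add_arc[where D = D, OF assms(2) ab(1,2) \<open>\<not> D a b\<close>, of v]
      unfolding D'_def by simp
  qed
  ultimately show "\<exists>D. orientation (\<lambda>u v. E u v \<or> u = a \<and> v = b \<or> u = b \<and> v = a) D \<and>
      strongly_connected V D \<and> (\<forall>v\<in>V. net_degree V D v mod 3 = \<beta> v mod 3)" by blast
qed

lemma in_S3_mono:
  assumes "finite V" and S: "in_S3 V E1" and sym1: "\<And>u v. E1 u v \<Longrightarrow> E1 v u"
    and sub: "\<And>u v. E1 u v \<Longrightarrow> E2 u v"
    and E2: "\<And>u v. E2 u v \<Longrightarrow> u \<in> V \<and> v \<in> V \<and> u \<noteq> v \<and> E2 v u"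
  shows "in_S3 V E2"
  using S sym1 sub
proof (induction "card {(u, v). E2 u v \<and> \<not> E1 u v}" arbitrary: E1 rule: less_induct)
  case less
  show ?case
  proof (cases "\<forall>u v. E2 u v \<longrightarrow> E1 u v")
    case True
    then have "E1 = E2" using less.prems(3) by (auto intro!: ext)
    then show ?thesis using less.prems(1) by simp
  next
    case False
    then obtain a b where ab: "E2 a b" "\<not> E1 a b" by blast
    then have ba: "E2 b a" "\<not> E1 b a" using E2 less.prems(2) by blast+
    define E1' where "E1' u v \<longleftrightarrow> E1 u v \<or> u = a \<and> v = b \<or> u = b \<and> v = a" for u v
    have "in_S3 V E1'"
      unfolding E1'_def using ab ba E2[OF ab(1)] by (intro in_S3_add_edge less.prems(1) \<open>finite V\<close>) auto
    moreover have "card {(u, v). E2 u v \<and> \<not> E1' u v} < card {(u, v). E2 u v \<and> \<not> E1 u v}"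
    proof (rule psubset_card_mono)
      show "finite {(u, v). E2 u v \<and> \<not> E1 u v}"
        by (rule finite_subset[of _ "V \<times> V"]) (use E2 \<open>finite V\<close> in auto)
      show "{(u, v). E2 u v \<and> \<not> E1' u v} \<subset> {(u, v). E2 u v \<and> \<not> E1 u v}"
        using ab unfolding E1'_def by auto
    qed
    moreover have "E1' u v \<Longrightarrow> E1' v u" "E1' u v \<Longrightarrow> E2 u v" for u v
      using less.prems(2,3) ab ba unfolding E1'_def by auto
    ultimately show ?thesis using less.hyps by blast
  qed
qed

definition induced_subgraph :: "'a set \<Rightarrow> ('a \<Rightarrow> 'a \<Rightarrow> bool) \<Rightarrow> 'a \<Rightarrow> 'a \<Rightarrow> bool" where
  "induced_subgraph W E u v \<longleftrightarrow> E u v \<and> u \<in> W \<and> v \<in> W"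

lemma orientation_insert_vertex:
  assumes D: "orientation (induced_subgraph W E) D" and "v \<notin> W"
    and "\<And>u. \<not> E u u" "\<And>x y. E x y \<Longrightarrow> E y x"
    and "Out \<inter> In = {}" "Out \<union> In = {w\<in>W. E v w}"
  shows "orientation (induced_subgraph (insert v W) E)
           (\<lambda>x y. D x y \<or> x = v \<and> y \<in> Out \<or> x \<in> In \<and> y = v)"
proof -
  have "D x y \<Longrightarrow> induced_subgraph W E x y" "induced_subgraph W E x y \<Longrightarrow> D x y \<noteq> D y x" for x y
    using D unfolding orientation_def by blast+
  then show ?thesis
    using assms unfolding orientation_def induced_subgraph_def
    by (smt (verit) Int_iff Un_iff empty_iff insert_iff mem_Collect_eq)
qed

lemma strongly_connected_insert_vertex:
  assumes "strongly_connected W D" "\<And>x y. D x y \<Longrightarrow> D' x y"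
    and "x \<in> W" "D' v x" "y \<in> W" "D' y v"
  shows "strongly_connected (insert v W) D'"
proof -
  let ?R = "{(x, y). D' x y}"
  have "strongly_connected W D'" using assms(1) by (rule strongly_connected_mono) (use assms(2) in blast)
  then have W: "(a, b) \<in> ?R\<^sup>*" if "a \<in> W" "b \<in> W" for a b
    using that unfolding strongly_connected_def by blast
  have "(v, b) \<in> ?R\<^sup>*" if "b \<in> W" for b
    using W[OF \<open>x \<in> W\<close> that] \<open>D' v x\<close> by (simp add: converse_rtrancl_into_rtrancl)
  moreover have "(a, v) \<in> ?R\<^sup>*" if "a \<in> W" for a
    using W[OF that \<open>y \<in> W\<close>] \<open>D' y v\<close> by (simp add: rtrancl_into_rtrancl)
  ultimately show ?thesis unfolding strongly_connected_def using W by auto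
qed

lemma net_degree_insert_vertex:
  assumes "finite W" "v \<notin> W" "Out \<subseteq> W" "In \<subseteq> W" "Out \<inter> In = {}"
    and "\<And>x y. D x y \<Longrightarrow> x \<in> W \<and> y \<in> W"
  defines "D' \<equiv> \<lambda>x y. D x y \<or> x = v \<and> y \<in> Out \<or> x \<in> In \<and> y = v"
  shows "net_degree (insert v W) D' v = int (card Out) - int (card In)"
    and "x \<in> W \<Longrightarrow> net_degree (insert v W) D' x = net_degree W D x + of_bool (x \<in> In) - of_bool (x \<in> Out)"
proof -
  have "{w\<in>insert v W. D' v w} = Out" "{w\<in>insert v W. D' w v} = In"
    using assms by auto
  then show "net_degree (insert v W) D' v = int (card Out) - int (card In)"
    unfolding net_degree_def out_degree_def in_degree_def by simp
next
  assume "x \<in> W"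
  then have "{w\<in>insert v W. D' x w} = {w\<in>W. D x w} \<union> (if x \<in> In then {v} else {})"
    "{w\<in>insert v W. D' w x} = {w\<in>W. D w x} \<union> (if x \<in> Out then {v} else {})"
    using assms by auto
  then show "net_degree (insert v W) D' x = net_degree W D x + of_bool (x \<in> In) - of_bool (x \<in> Out)"
    using assms(1,2) unfolding net_degree_def out_degree_def in_degree_def by auto
qed

lemma split_with_card_difference_mod_3:
  fixes b :: int
  assumes "finite N" "card N \<ge> 4"
  obtains Out In where "Out \<inter> In = {}" "Out \<union> In = N" "Out \<noteq> {}" "In \<noteq> {}"
    "(int (card Out) - int (card In)) mod 3 = b mod 3"
proof -
  have "\<exists>m::nat. 1 \<le> m \<and> m \<le> 3 \<and> (2 * int m - K) mod 3 = b mod 3" for K :: int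
    by presburger
  then obtain m :: nat where m: "1 \<le> m" "m \<le> 3" "(2 * int m - int (card N)) mod 3 = b mod 3"
    by blast
  then have "m \<le> card N" using assms(2) by simp
  then obtain Out where Out: "Out \<subseteq> N" "card Out = m" by (meson obtain_subset_with_card_n)
  then have "card (N - Out) = card N - m"
    using assms(1) by (simp add: card_Diff_subset finite_subset)
  then have "card (N - Out) > 0" and diff: "int (card Out) - int (card (N - Out)) = 2 * int m - int (card N)"
    using Out(2) m(2) assms(2) \<open>m \<le> card N\<close> by auto
  then have "N - Out \<noteq> {}" by force
  moreover have "Out \<inter> (N - Out) = {}" "Out \<union> (N - Out) = N" "Out \<noteq> {}"
    using Out m(1) by auto
  ultimately show thesis using that m(3) diff by metis
qed

lemma sum_of_bool_mem:
  assumes "finite W" "A \<subseteq> W"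
  shows "(\<Sum>x\<in>W. of_bool (x \<in> A)) = (of_nat (card A) :: 'b :: semiring_1)"
proof -
  have "W \<inter> {x. x \<in> A} = A" using assms(2) by blast
  then show ?thesis using assms(1) by simp
qed

lemma in_S3_insert_vertex:
  assumes "finite W" and irrefl: "\<And>u. \<not> E u u" and sym: "\<And>x y. E x y \<Longrightarrow> E y x"
    and S: "in_S3 W (induced_subgraph W E)" and "v \<notin> W" and deg: "card {w\<in>W. E v w} \<ge> 4"
  shows "in_S3 (insert v W) (induced_subgraph (insert v W) E)"
proof (rule in_S3I)
  fix \<beta> :: "'a \<Rightarrow> int" assume sum: "(\<Sum>x\<in>insert v W. \<beta> x) mod 3 = 0"
  obtain Out In where split: "Out \<inter> In = {}" "Out \<union> In = {w\<in>W. E v w}" "Out \<noteq> {}" "In \<noteq> {}"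
    and v_mod: "(int (card Out) - int (card In)) mod 3 = \<beta> v mod 3"
    using split_with_card_difference_mod_3[of "{w\<in>W. E v w}"] \<open>finite W\<close> deg by auto
  then have "Out \<subseteq> W" "In \<subseteq> W" by auto
  define \<beta>' where "\<beta>' x = \<beta> x - of_bool (x \<in> In) + of_bool (x \<in> Out)" for x
  have "(\<Sum>x\<in>W. \<beta>' x) = (\<Sum>x\<in>W. \<beta> x) - int (card In) + int (card Out)"
    using sum_of_bool_mem[where 'b = int, OF \<open>finite W\<close>] \<open>In \<subseteq> W\<close> \<open>Out \<subseteq> W\<close>
    unfolding \<beta>'_def
    by (simp add: sum.distrib sum_subtractf)
  also have "\<dots> = (\<Sum>x\<in>insert v W. \<beta> x) + ((int (card Out) - int (card In)) - \<beta> v)"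
    using \<open>finite W\<close> \<open>v \<notin> W\<close> by simp
  also have "3 dvd \<dots>"
    using sum v_mod by (intro dvd_add) (simp_all add: mod_eq_dvd_iff dvd_eq_mod_eq_0)
  finally have "(\<Sum>x\<in>W. \<beta>' x) mod 3 = 0" by simp
  then obtain D where D: "orientation (induced_subgraph W E) D" "strongly_connected W D"
    "\<forall>x\<in>W. net_degree W D x mod 3 = \<beta>' x mod 3"
    using in_S3E[OF S] by metis
  have DW: "D x y \<Longrightarrow> x \<in> W \<and> y \<in> W" for x y
    using D(1) unfolding orientation_def induced_subgraph_def by blast
  define D' where "D' x y \<longleftrightarrow> D x y \<or> x = v \<and> y \<in> Out \<or> x \<in> In \<and> y = v" for x y
  have "orientation (induced_subgraph (insert v W) E) D'"
    unfolding D'_def using D(1) \<open>v \<notin> W\<close> irrefl sym split(1,2) by (rule orientation_insert_vertex)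
  moreover obtain x y where "x \<in> Out" "y \<in> In" using split(3,4) by blast
  then have "strongly_connected (insert v W) D'"
    using D(2) \<open>Out \<subseteq> W\<close> \<open>In \<subseteq> W\<close>
    by (intro strongly_connected_insert_vertex[of W D D' x v y]) (auto simp: D'_def)
  moreover have "net_degree (insert v W) D' x mod 3 = \<beta> x mod 3" if "x \<in> insert v W" for x
  proof (cases "x = v")
    case True
    have "net_degree (insert v W) D' v = int (card Out) - int (card In)"
      unfolding D'_def by (rule net_degree_insert_vertex(1)[where D = D, OF \<open>finite W\<close> \<open>v \<notin> W\<close>
          \<open>Out \<subseteq> W\<close> \<open>In \<subseteq> W\<close> split(1) DW])
    then show ?thesis using True v_mod by simp
  next
    case False
    then have "x \<in> W" using that by simp
    show ?thesis
    proof (rule mod_eq_shift)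
      show "net_degree W D x mod 3 = (\<beta> x - (of_bool (x \<in> In) - of_bool (x \<in> Out))) mod 3"
        using D(3) \<open>x \<in> W\<close> unfolding \<beta>'_def by (simp add: algebra_simps)
      show "net_degree (insert v W) D' x = net_degree W D x + (of_bool (x \<in> In) - of_bool (x \<in> Out))"
        using net_degree_insert_vertex(2)[where D = D, OF \<open>finite W\<close> \<open>v \<notin> W\<close> \<open>Out \<subseteq> W\<close>
            \<open>In \<subseteq> W\<close> split(1) DW \<open>x \<in> W\<close>]
        unfolding D'_def by simp
    qed
  qed
  ultimately show "\<exists>D. orientation (induced_subgraph (insert v W) E) D \<and>
      strongly_connected (insert v W) D \<and> (\<forall>x\<in>insert v W. net_degree (insert v W) D x mod 3 = \<beta> x mod 3)"
    by blast
qed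

lemma in_S3_induced_union:
  assumes "finite W" and irrefl: "\<And>u. \<not> E u u" and sym: "\<And>x y. E x y \<Longrightarrow> E y x"
    and S: "in_S3 W (induced_subgraph W E)"
    and "finite T" "T \<inter> W = {}" "\<forall>t\<in>T. card {w\<in>W. E t w} \<ge> 4"
  shows "in_S3 (W \<union> T) (induced_subgraph (W \<union> T) E)"
  using assms(5-7)
proof (induction T rule: finite_induct)
  case empty
  then show ?case using S by simp
next
  case (insert t T)
  have "card {w\<in>W. E t w} \<le> card {w\<in>W \<union> T. E t w}"
    by (rule card_mono) (use \<open>finite W\<close> insert.hyps(1) in auto)
  then have "card {w\<in>W \<union> T. E t w} \<ge> 4" using insert.prems(2) by auto
  then show ?case
    using in_S3_insert_vertex[where E = E and W = "W \<union> T" and v = t] irrefl sym insert \<open>finite W\<close>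
    by auto
qed

definition complete_bipartite :: "'a set \<Rightarrow> 'a set \<Rightarrow> 'a \<Rightarrow> 'a \<Rightarrow> bool" where
  "complete_bipartite A B u v \<longleftrightarrow> u \<in> A \<and> v \<in> B \<or> u \<in> B \<and> v \<in> A"

locale indexed_bipartition =
  fixes xs :: "'i \<Rightarrow> 'a" and I :: "'i set" and ys :: "'j \<Rightarrow> 'a" and J :: "'j set"
  assumes finite_I: "finite I" and finite_J: "finite J"
    and inj_xs: "inj_on xs I" and inj_ys: "inj_on ys J"
    and disjoint: "xs ` I \<inter> ys ` J = {}"
begin

definition orient :: "('j \<Rightarrow> 'i set) \<Rightarrow> 'a \<Rightarrow> 'a \<Rightarrow> bool" where
  "orient sel u v \<longleftrightarrow>
     (\<exists>i\<in>I. \<exists>j\<in>J. u = xs i \<and> v = ys j \<and> i \<notin> sel j \<or> u = ys j \<and> v = xs i \<and> i \<in> sel j)"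

lemma xs_neq_ys: "i \<in> I \<Longrightarrow> j \<in> J \<Longrightarrow> xs i \<noteq> ys j"
  using disjoint by blast

lemma orient_xs_ys: "i \<in> I \<Longrightarrow> j \<in> J \<Longrightarrow> orient sel (xs i) (ys j) \<longleftrightarrow> i \<notin> sel j"
  unfolding orient_def using inj_xs inj_ys xs_neq_ys by (metis inj_on_eq_iff)

lemma orient_ys_xs: "i \<in> I \<Longrightarrow> j \<in> J \<Longrightarrow> orient sel (ys j) (xs i) \<longleftrightarrow> i \<in> sel j"
  unfolding orient_def using inj_xs inj_ys xs_neq_ys by (metis inj_on_eq_iff)

lemma orient_within_side:
  "i \<in> I \<Longrightarrow> i' \<in> I \<Longrightarrow> \<not> orient sel (xs i) (xs i')"
  "j \<in> J \<Longrightarrow> j' \<in> J \<Longrightarrow> \<not> orient sel (ys j) (ys j')"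
  unfolding orient_def using xs_neq_ys by metis+

lemma orientation_orient: "orientation (complete_bipartite (xs ` I) (ys ` J)) (orient sel)"
  unfolding orientation_def
proof (intro conjI allI impI)
  fix u v assume "orient sel u v"
  then show "complete_bipartite (xs ` I) (ys ` J) u v"
    unfolding orient_def complete_bipartite_def by auto
next
  fix u v assume "complete_bipartite (xs ` I) (ys ` J) u v"
  then obtain i j where "i \<in> I" "j \<in> J" "u = xs i \<and> v = ys j \<or> u = ys j \<and> v = xs i"
    unfolding complete_bipartite_def by auto
  then show "orient sel u v \<noteq> orient sel v u" using orient_xs_ys orient_ys_xs by auto
qed

abbreviation verts :: "'a set" where "verts \<equiv> xs ` I \<union> ys ` J"

lemma net_degree_orient_xs:
  assumes "i \<in> I"
  shows "net_degree verts (orient sel) (xs i) = int (card J) - 2 * int (card {j\<in>J. i \<in> sel j})"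
proof -
  have "{w\<in>verts. orient sel (xs i) w} = ys ` (J - {j\<in>J. i \<in> sel j})"
    "{w\<in>verts. orient sel w (xs i)} = ys ` {j\<in>J. i \<in> sel j}"
    using assms orient_xs_ys orient_ys_xs orient_within_side by auto
  moreover have "card (ys ` A) = card A" if "A \<subseteq> J" for A
    using inj_ys that by (simp add: card_image inj_on_subset)
  moreover have "card (J - {j\<in>J. i \<in> sel j}) = card J - card {j\<in>J. i \<in> sel j}"
    using finite_J by (simp add: card_Diff_subset)
  moreover have "card {j\<in>J. i \<in> sel j} \<le> card J"
    using finite_J by (simp add: card_mono)
  ultimately show ?thesis
    unfolding net_degree_def out_degree_def in_degree_def by (simp add: of_nat_diff)
qed

lemma net_degree_orient_ys:
  assumes "j \<in> J" "sel j \<subseteq> I"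
  shows "net_degree verts (orient sel) (ys j) = 2 * int (card (sel j)) - int (card I)"
proof -
  have "{w\<in>verts. orient sel (ys j) w} = xs ` sel j"
    "{w\<in>verts. orient sel w (ys j)} = xs ` (I - sel j)"
    using assms orient_xs_ys orient_ys_xs orient_within_side by auto
  moreover have "card (xs ` A) = card A" if "A \<subseteq> I" for A
    using inj_xs that by (simp add: card_image inj_on_subset)
  moreover have "card (I - sel j) = card I - card (sel j)" "card (sel j) \<le> card I"
    using finite_I assms(2) by (simp_all add: card_Diff_subset card_mono finite_subset)
  ultimately show ?thesis
    using assms(2) unfolding net_degree_def out_degree_def in_degree_def by (simp add: of_nat_diff)
qed

lemma orient_connects_xs:
  assumes sel: "\<And>j. j \<in> J \<Longrightarrow> sel j \<subseteq> I"
    and conn: "strongly_connected I (\<lambda>i i'. \<exists>j\<in>J. i \<notin> sel j \<and> i' \<in> sel j)"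
    and "i \<in> I" "i' \<in> I"
  shows "(xs i, xs i') \<in> {(u, v). orient sel u v}\<^sup>*"
proof -
  let ?R = "{(u, v). orient sel u v}\<^sup>*"
  have "(i, i') \<in> {(i, i'). \<exists>j\<in>J. i \<notin> sel j \<and> i' \<in> sel j}\<^sup>*"
    using conn assms(3,4) unfolding strongly_connected_def by blast
  then have "(xs i, xs i') \<in> ?R \<and> i' \<in> I"
  proof (induction rule: rtrancl_induct)
    case (step i' i'')
    obtain j where "j \<in> J" "i' \<notin> sel j" "i'' \<in> sel j" using step.hyps(2) by blast
    moreover have "i' \<in> I" using step.IH ..
    moreover have "i'' \<in> I" using sel \<open>j \<in> J\<close> \<open>i'' \<in> sel j\<close> by blast
    ultimately have "orient sel (xs i') (ys j)" "orient sel (ys j) (xs i'')"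
      using orient_xs_ys orient_ys_xs by simp_all
    then have "(xs i, xs i'') \<in> ?R"
      using rtrancl_into_rtrancl[OF rtrancl_into_rtrancl[OF conjunct1[OF step.IH]]] by simp
    then show ?case using \<open>i'' \<in> I\<close> by simp
  qed (simp add: assms(3))
  then show ?thesis ..
qed

lemma strongly_connected_orient:
  assumes sel: "\<And>j. j \<in> J \<Longrightarrow> sel j \<subseteq> I \<and> sel j \<noteq> {} \<and> sel j \<noteq> I"
    and conn: "strongly_connected I (\<lambda>i i'. \<exists>j\<in>J. i \<notin> sel j \<and> i' \<in> sel j)"
  shows "strongly_connected verts (orient sel)"
proof -
  let ?R = "{(u, v). orient sel u v}\<^sup>*"
  note xs_xs = orient_connects_xs[of sel, OF _ conn]
  have hub: "\<exists>i\<in>I. (w, xs i) \<in> ?R \<and> (xs i, w) \<in> ?R" if w: "w \<in> verts" for w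
  proof (cases "w \<in> xs ` I")
    case True
    then show ?thesis by blast
  next
    case False
    then obtain j where "j \<in> J" "w = ys j" using w by auto
    moreover obtain i i' where "i \<in> sel j" "i' \<in> I - sel j" using sel[OF \<open>j \<in> J\<close>] by blast
    moreover have "i \<in> I" "i' \<in> I" using sel[OF \<open>j \<in> J\<close>] \<open>i \<in> sel j\<close> \<open>i' \<in> I - sel j\<close> by auto
    ultimately have "orient sel w (xs i)" "orient sel (xs i') w"
      using orient_xs_ys orient_ys_xs by simp_all
    then have "(w, xs i) \<in> ?R" and i'w: "(xs i', w) \<in> ?R" by (simp_all add: r_into_rtrancl)
    moreover have "(xs i, w) \<in> ?R"
      using rtrancl_trans[OF xs_xs i'w] sel \<open>i \<in> I\<close> \<open>i' \<in> I\<close> by blast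
    ultimately show ?thesis using \<open>i \<in> I\<close> by blast
  qed
  show ?thesis unfolding strongly_connected_def
  proof (intro ballI)
    fix u v assume "u \<in> verts" "v \<in> verts"
    then obtain i i' where "i \<in> I" "i' \<in> I" and ui: "(u, xs i) \<in> ?R" and i'v: "(xs i', v) \<in> ?R"
      using hub by meson
    moreover have "(xs i, xs i') \<in> ?R" using xs_xs sel \<open>i \<in> I\<close> \<open>i' \<in> I\<close> by blast
    ultimately show "(u, v) \<in> ?R" using rtrancl_trans[OF rtrancl_trans] by metis
  qed
qed

end

definition cyclic_block :: "nat \<Rightarrow> nat \<Rightarrow> nat set" where
  "cyclic_block j k = (\<lambda>d. (j + d) mod 5) ` {1..k}"

definition column_block :: "nat \<Rightarrow> nat \<Rightarrow> nat set" where
  "column_block c k = insert 4 ((\<lambda>d. (c + d) mod 4) ` {1..<k})"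

lemma cyclic_block_props:
  assumes "j < 5" "k \<in> {1, 2, 3}"
  shows "cyclic_block j k \<subseteq> {..<5}" "card (cyclic_block j k) = k"
    "j \<notin> cyclic_block j k" "Suc j mod 5 \<in> cyclic_block j k"
proof -
  have "j = 0 \<or> j = 1 \<or> j = 2 \<or> j = 3 \<or> j = 4" "k = 1 \<or> k = 2 \<or> k = 3" using assms by auto
  moreover have "{1..1::nat} = {1}" "{1..2::nat} = {1, 2}" "{1..3::nat} = {1, 2, 3}" by auto
  ultimately show "cyclic_block j k \<subseteq> {..<5}" "card (cyclic_block j k) = k"
    "j \<notin> cyclic_block j k" "Suc j mod 5 \<in> cyclic_block j k"
    unfolding cyclic_block_def by auto
qed

lemma column_block_props:
  assumes "c < 4" "k \<in> {1, 2, 3}"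
  shows "column_block c k \<subseteq> {..<5}" "card (column_block c k) = k"
    "4 \<in> column_block c k" "c \<notin> column_block c k"
proof -
  have "c = 0 \<or> c = 1 \<or> c = 2 \<or> c = 3" "k = 1 \<or> k = 2 \<or> k = 3" using assms by auto
  moreover have "{1..<1::nat} = {}" "{1..<2::nat} = {1}" "{1..<3::nat} = {1, 2}" by auto
  ultimately show "column_block c k \<subseteq> {..<5}" "card (column_block c k) = k"
    "4 \<in> column_block c k" "c \<notin> column_block c k"
    unfolding column_block_def by auto
qed

lemma card_switched_members:
  fixes S :: "'j \<Rightarrow> 'i set"
  assumes "finite J" "\<And>j. j \<in> J \<Longrightarrow> sw j \<Longrightarrow> a \<in> S j \<and> col j \<notin> S j" "i \<noteq> a"
  shows "card {j\<in>J. i \<in> (if sw j then insert (col j) (S j - {a}) else S j)}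
           = card {j\<in>J. i \<in> S j} + card {j\<in>J. sw j \<and> col j = i}"
proof -
  have "{j\<in>J. i \<in> (if sw j then insert (col j) (S j - {a}) else S j)}
          = {j\<in>J. i \<in> S j} \<union> {j\<in>J. sw j \<and> col j = i}"
    using assms(2,3) by auto
  moreover have "{j\<in>J. i \<in> S j} \<inter> {j\<in>J. sw j \<and> col j = i} = {}"
    using assms(2) by auto
  ultimately show ?thesis using assms(1) by (simp add: card_Un_disjoint)
qed

lemma sum_card_incidences:
  assumes "finite I" "finite J" "\<And>j. j \<in> J \<Longrightarrow> S j \<subseteq> I"
  shows "(\<Sum>i\<in>I. card {j\<in>J. i \<in> S j}) = (\<Sum>j\<in>J. card (S j))"
proof -
  have "J \<inter> {j. i \<in> S j} = {j\<in>J. i \<in> S j}" for i by blast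
  then have "(\<Sum>i\<in>I. card {j\<in>J. i \<in> S j}) = (\<Sum>i\<in>I. \<Sum>j\<in>J. of_bool (i \<in> S j))"
    using assms(2) by simp
  also have "\<dots> = (\<Sum>j\<in>J. \<Sum>i\<in>I. of_bool (i \<in> S j))"
    by (rule sum.swap)
  also have "\<dots> = (\<Sum>j\<in>J. card (S j))"
  proof (rule sum.cong)
    fix j assume "j \<in> J"
    then have "I \<inter> {i. i \<in> S j} = S j" using assms(3) by blast
    then show "(\<Sum>i\<in>I. of_bool (i \<in> S j)) = card (S j)" using assms(1) by simp
  qed simp
  finally show ?thesis .
qed

lemma card_column_slots:
  assumes "c < 4" "d \<le> 2"
  shows "card {j\<in>{..<13}. 5 \<le> j \<and> (j - 5) mod 2 < d \<and> (j - 5) div 2 = c} = d"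
proof -
  have "{j\<in>{..<13}. 5 \<le> j \<and> (j - 5) mod 2 < d \<and> (j - 5) div 2 = c} = (\<lambda>s. 5 + 2 * c + s) ` {..<d}"
  proof (intro equalityI subsetI)
    fix j assume j: "j \<in> {j\<in>{..<13}. 5 \<le> j \<and> (j - 5) mod 2 < d \<and> (j - 5) div 2 = c}"
    then have "j = 5 + 2 * c + (j - 5) mod 2"
      using div_mult_mod_eq[of "j - 5" 2] by auto
    then show "j \<in> (\<lambda>s. 5 + 2 * c + s) ` {..<d}" using j by (intro image_eqI) auto
  next
    fix j assume "j \<in> (\<lambda>s. 5 + 2 * c + s) ` {..<d}"
    then obtain s where "s < d" "j = 5 + 2 * c + s" by auto
    moreover have "(2 * c + s) mod 2 = s" "(2 * c + s) div 2 = c" using \<open>s < d\<close> assms(2) by auto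
    ultimately show "j \<in> {j\<in>{..<13}. 5 \<le> j \<and> (j - 5) mod 2 < d \<and> (j - 5) div 2 = c}"
      using assms by auto
  qed
  then show ?thesis by (simp add: card_image)
qed

lemma mod_eq_last_summand:
  fixes r t :: "nat \<Rightarrow> int"
  assumes "(\<Sum>i<Suc n. r i) mod m = (\<Sum>i<Suc n. t i) mod m" "\<And>i. i < n \<Longrightarrow> r i mod m = t i mod m"
  shows "r n mod m = t n mod m"
proof -
  have "(\<Sum>i<n. r i) mod m = (\<Sum>i<n. r i mod m) mod m" by (rule mod_sum_eq[symmetric])
  also have "(\<Sum>i<n. r i mod m) = (\<Sum>i<n. t i mod m)" using assms(2) by (intro sum.cong) auto
  also have "(\<Sum>i<n. t i mod m) mod m = (\<Sum>i<n. t i) mod m" by (rule mod_sum_eq)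
  finally have "(\<Sum>i<n. r i) mod m = (\<Sum>i<n. t i) mod m" .
  then have "((\<Sum>i<Suc n. r i) - (\<Sum>i<n. r i)) mod m = ((\<Sum>i<Suc n. t i) - (\<Sum>i<n. t i)) mod m"
    using assms(1) by (intro mod_diff_cong) simp_all
  then show ?thesis by simp
qed

text \<open>
  The \<open>j\<close>-th vertex of the 13-side chooses the set \<open>sel j\<close> of its out-neighbours on the
  5-side. For \<open>j < 5\<close> it takes a cyclic block starting at \<open>j + 1\<close>, which later yields the
  cycle \<open>x\<^sub>j \<rightarrow> y\<^sub>j \<rightarrow> x\<^sub>j\<^sub>+\<^sub>1\<close>. The remaining eight vertices form two per column
  \<open>c < 4\<close>; each starts from a block containing 4 but not \<open>c\<close>, and swapping 4 for \<open>c\<close> in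
  \<open>\<delta> c \<le> 2\<close> of them corrects the count at \<open>c\<close> modulo 3. The count at 4 is then right
  by double counting.
\<close>
lemma exists_selection_5_13:
  fixes k :: "nat \<Rightarrow> nat" and t :: "nat \<Rightarrow> int"
  assumes k: "\<And>j. k j \<in> {1, 2, 3}"
    and t: "(\<Sum>i<5. t i) mod 3 = (\<Sum>j<13. int (k j)) mod 3"
  obtains sel where "\<And>j. j < 13 \<Longrightarrow> sel j \<subseteq> {..<5} \<and> card (sel j) = k j"
    "\<And>j. j < 5 \<Longrightarrow> j \<notin> sel j \<and> Suc j mod 5 \<in> sel j"
    "\<And>i. i < 5 \<Longrightarrow> int (card {j\<in>{..<13}. i \<in> sel j}) mod 3 = t i mod 3"
proof -
  define col where "col j = (j - 5) div 2" for j :: nat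
  define base where
    "base j = (if j < 5 then cyclic_block j (k j) else column_block (col j) (k j))" for j
  define \<delta> where "\<delta> i = nat ((t i - int (card {j\<in>{..<13}. i \<in> base j})) mod 3)" for i
  define sw where "sw j \<longleftrightarrow> 5 \<le> j \<and> (j - 5) mod 2 < \<delta> (col j)" for j
  define sel where "sel j = (if sw j then insert (col j) (base j - {4}) else base j)" for j
  have col: "col j < 4" if "5 \<le> j" "j < 13" for j
    using that unfolding col_def by auto
  have base: "base j \<subseteq> {..<5} \<and> card (base j) = k j" if "j < 13" for j
    using cyclic_block_props[OF _ k] column_block_props[OF col k] that unfolding base_def by auto
  have switchable: "4 \<in> base j \<and> col j \<notin> base j" if "j < 13" "sw j" for j
    using column_block_props[OF col k] that unfolding base_def sw_def by auto
  have sel: "sel j \<subseteq> {..<5} \<and> card (sel j) = k j" if "j < 13" for j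
  proof (cases "sw j")
    case True
    then have "col j < 4" using col that unfolding sw_def by auto
    then show ?thesis
      using base[OF that] switchable[OF that True] True k[of j] unfolding sel_def
      by (auto simp: card_insert_if finite_subset card_Diff_singleton)
  qed (use base[OF that] in \<open>simp add: sel_def\<close>)
  define r where "r i = int (card {j\<in>{..<13}. i \<in> sel j})" for i
  have count: "r i mod 3 = t i mod 3" if "i < 4" for i
  proof -
    have "card {j\<in>{..<13}. i \<in> sel j}
        = card {j\<in>{..<13}. i \<in> base j} + card {j\<in>{..<13}. sw j \<and> col j = i}"
      unfolding sel_def using switchable that by (intro card_switched_members) auto
    also have "{j\<in>{..<13}. sw j \<and> col j = i}
        = {j\<in>{..<13}. 5 \<le> j \<and> (j - 5) mod 2 < \<delta> i \<and> (j - 5) div 2 = i}"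
      unfolding sw_def col_def by auto
    also have "card \<dots> = \<delta> i"
      using that by (intro card_column_slots) (auto simp: \<delta>_def)
    finally show ?thesis unfolding r_def \<delta>_def by (simp add: mod_simps)
  qed
  have "(\<Sum>i<5. card {j\<in>{..<13}. i \<in> sel j}) = (\<Sum>j<13. card (sel j))"
    using sel by (intro sum_card_incidences) auto
  also have "\<dots> = (\<Sum>j<13. k j)" using sel by simp
  finally have "(\<Sum>i<5. r i) = (\<Sum>j<13. int (k j))"
    unfolding r_def by (simp only: of_nat_sum[symmetric])
  then have "(\<Sum>i<Suc 4. r i) mod 3 = (\<Sum>i<Suc 4. t i) mod 3"
    using t by simp
  then have "r 4 mod 3 = t 4 mod 3" using count by (rule mod_eq_last_summand)
  with count have "r i mod 3 = t i mod 3" if "i < 5" for i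
    using that by (cases "i = 4") auto
  moreover have "j \<notin> sel j \<and> Suc j mod 5 \<in> sel j" if "j < 5" for j
    using cyclic_block_props[OF that k] that unfolding sel_def sw_def base_def by auto
  ultimately show thesis using that sel unfolding r_def by blast
qed

lemma mod_3_sum_shift_5_13:
  fixes b c :: "nat \<Rightarrow> int"
  assumes "((\<Sum>i<5. b i) + (\<Sum>j<13. c j)) mod 3 = 0"
  shows "(\<Sum>i<5. b i + 2) mod 3 = (\<Sum>j<13. (2 * c j) mod 3 + 1) mod 3"
proof -
  have double: "(\<Sum>j<13. (2 * c j) mod 3) mod 3 = (2 * (\<Sum>j<13. c j)) mod 3"
    by (simp add: mod_sum_eq sum_distrib_left)
  have key: "(x + y) mod 3 = 0 \<Longrightarrow> z mod 3 = (2 * y) mod 3 \<Longrightarrow> (x + 10) mod 3 = (z + 13) mod 3"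
    for x y z :: int by presburger
  have "(\<Sum>i<5. b i + 2) = (\<Sum>i<5. b i) + 10"
    "(\<Sum>j<13. (2 * c j) mod 3 + 1) = (\<Sum>j<13. (2 * c j) mod 3) + 13"
    by (simp_all add: sum.distrib)
  then show ?thesis using key[OF assms double] by (simp only:)
qed

text \<open>
  A vertex on the 13-side with \<open>k\<close> out-neighbours has net degree \<open>2k - 5\<close>, one on the 5-side
  with in-degree \<open>r\<close> has net degree \<open>13 - 2r\<close>; so \<open>k \<equiv> 2\<beta> + 1\<close> and \<open>r \<equiv> \<beta> + 2\<close> (mod 3)
  are the targets for the selection lemma above.
\<close>
lemma in_S3_indexed_5_13:
  assumes "indexed_bipartition xs {..<5::nat} ys {..<13::nat}"
  shows "in_S3 (xs ` {..<5} \<union> ys ` {..<13}) (complete_bipartite (xs ` {..<5}) (ys ` {..<13}))"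
proof -
  interpret indexed_bipartition xs "{..<5}" ys "{..<13}" by (fact assms)
  show ?thesis
  proof (rule in_S3I)
    fix \<beta> :: "'a \<Rightarrow> int" assume sum: "(\<Sum>v\<in>verts. \<beta> v) mod 3 = 0"
    define k where "k j = nat ((2 * \<beta> (ys j)) mod 3) + 1" for j
    define t where "t i = \<beta> (xs i) + 2" for i
    have int_k: "int (k j) = (2 * \<beta> (ys j)) mod 3 + 1" for j
      unfolding k_def by simp
    have k: "k j \<in> {1, 2, 3}" for j
    proof -
      have "(2 * \<beta> (ys j)) mod 3 \<in> {0, 1, 2}" by auto
      then show ?thesis unfolding k_def by auto
    qed
    have "(\<Sum>v\<in>verts. \<beta> v) = (\<Sum>i<5. \<beta> (xs i)) + (\<Sum>j<13. \<beta> (ys j))"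
      using disjoint inj_xs inj_ys by (simp add: sum.union_disjoint sum.reindex)
    then have "(\<Sum>i<5. t i) mod 3 = (\<Sum>j<13. int (k j)) mod 3"
      using mod_3_sum_shift_5_13[of "\<lambda>i. \<beta> (xs i)" "\<lambda>j. \<beta> (ys j)"] sum
      unfolding t_def int_k by simp
    then obtain sel where sel: "\<And>j. j < 13 \<Longrightarrow> sel j \<subseteq> {..<5} \<and> card (sel j) = k j"
      and cyclic: "\<And>j. j < 5 \<Longrightarrow> j \<notin> sel j \<and> Suc j mod 5 \<in> sel j"
      and count: "\<And>i. i < 5 \<Longrightarrow> int (card {j\<in>{..<13}. i \<in> sel j}) mod 3 = t i mod 3"
      by (rule exists_selection_5_13[OF k]) (rule that)
    have "strongly_connected {..<5} (\<lambda>i i'. \<exists>j\<in>{..<13}. i \<notin> sel j \<and> i' \<in> sel j)"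
      using cyclic by (intro strongly_connected_cycle) force+
    moreover have "sel j \<subseteq> {..<5} \<and> sel j \<noteq> {} \<and> sel j \<noteq> {..<5}" if "j \<in> {..<13}" for j
      using sel[of j] k[of j] that by auto
    ultimately have "strongly_connected verts (orient sel)"
      by (intro strongly_connected_orient)
    moreover have "net_degree verts (orient sel) v mod 3 = \<beta> v mod 3" if v: "v \<in> verts" for v
    proof (cases "v \<in> xs ` {..<5}")
      case True
      then obtain i where "i < 5" "v = xs i" by auto
      moreover have "r mod 3 = (b + 2) mod 3 \<Longrightarrow> (13 - 2 * r) mod 3 = b mod 3" for r b :: int
        by presburger
      ultimately show ?thesis
        using net_degree_orient_xs[of i sel] count[of i] unfolding t_def by simp
    next
      case False
      then obtain j where "j < 13" "v = ys j" using v by auto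
      moreover have "(2 * ((2 * c) mod 3 + 1) - 5) mod 3 = c mod 3" for c :: int
        by presburger
      ultimately show ?thesis
        using net_degree_orient_ys[of j sel] sel[of j] int_k[of j] by simp
    qed
    ultimately show "\<exists>D. orientation (complete_bipartite (xs ` {..<5}) (ys ` {..<13})) D \<and>
        strongly_connected verts D \<and> (\<forall>v\<in>verts. net_degree verts D v mod 3 = \<beta> v mod 3)"
      using orientation_orient by blast
  qed
qed

lemma in_S3_complete_bipartite_5_13:
  assumes "finite A" "finite B" "A \<inter> B = {}" "card A = 5" "card B = 13"
  shows "in_S3 (A \<union> B) (complete_bipartite A B)"
proof -
  obtain xs :: "nat \<Rightarrow> 'a" where xs: "bij_betw xs {..<5} A"
    using finite_same_card_bij[of "{..<5::nat}" A] assms by auto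
  obtain ys :: "nat \<Rightarrow> 'a" where ys: "bij_betw ys {..<13} B"
    using finite_same_card_bij[of "{..<13::nat}" B] assms by auto
  have "indexed_bipartition xs {..<5} ys {..<13}"
    using xs ys assms(3) by unfold_locales (auto simp: bij_betw_def)
  then have "in_S3 (xs ` {..<5} \<union> ys ` {..<13}) (complete_bipartite (xs ` {..<5}) (ys ` {..<13}))"
    by (rule in_S3_indexed_5_13)
  moreover have "xs ` {..<5} = A" "ys ` {..<13} = B"
    using xs ys by (simp_all add: bij_betw_def)
  ultimately show ?thesis by simp
qed

lemma finite_cut_edges: "finite V \<Longrightarrow> X \<subseteq> V \<Longrightarrow> finite (cut_edges V E X)"
  unfolding cut_edges_def by (rule finite_subset[of _ "V \<times> V"]) auto

lemma card_cut_edges_complement: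
  assumes "\<And>u v. E u v \<Longrightarrow> E v u" "X \<subseteq> V"
  shows "card (cut_edges V E (V - X)) = card (cut_edges V E X)"
proof -
  have "cut_edges V E (V - X) = prod.swap ` cut_edges V E X"
    unfolding cut_edges_def using assms by (auto simp: image_iff)
  then show ?thesis by (simp add: card_image)
qed

lemma card_out_neighbours_le_cut:
  assumes "finite V" "X \<subseteq> V" "x \<in> X"
  shows "card {y\<in>V - X. E x y} \<le> card (cut_edges V E X)"
proof -
  have "Pair x ` {y\<in>V - X. E x y} \<subseteq> cut_edges V E X"
    using assms unfolding cut_edges_def by auto
  then have "card (Pair x ` {y\<in>V - X. E x y}) \<le> card (cut_edges V E X)"
    using finite_cut_edges[OF assms(1,2)] by (rule card_mono[rotated])
  then show ?thesis by (simp add: card_image inj_on_def)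
qed

lemma card_in_neighbours_le_cut:
  assumes "finite V" "X \<subseteq> V" "u \<in> V - X" "u' \<in> V - X" "u \<noteq> u'"
  shows "card {x\<in>X. E x u} + card {x\<in>X. E x u'} \<le> card (cut_edges V E X)"
proof -
  let ?P = "(\<lambda>x. (x, u)) ` {x\<in>X. E x u}" and ?P' = "(\<lambda>x. (x, u')) ` {x\<in>X. E x u'}"
  have "finite X" using assms(1,2) by (rule finite_subset[rotated])
  have "?P \<union> ?P' \<subseteq> cut_edges V E X" using assms unfolding cut_edges_def by auto
  then have "card (?P \<union> ?P') \<le> card (cut_edges V E X)"
    using finite_cut_edges[OF assms(1,2)] by (rule card_mono[rotated])
  moreover have "card (?P \<union> ?P') = card ?P + card ?P'"
    using \<open>finite X\<close> assms(5) by (intro card_Un_disjoint) auto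
  ultimately show ?thesis by (simp add: card_image inj_on_def)
qed

lemma card_side_of_small_cut:
  assumes "simple_graph V E" and deg: "\<forall>v\<in>V. degree V E v \<ge> 4"
    and "X \<noteq> {}" "X \<subseteq> V" and cut: "card (cut_edges V E X) \<le> 3"
  shows "card X \<ge> 5"
proof (rule ccontr)
  assume "\<not> card X \<ge> 5"
  have "finite V" using assms(1) unfolding simple_graph_def by simp
  then have "finite X" using assms(4) by (rule finite_subset[rotated])
  then have "1 \<le> card X" "card X \<le> 4"
    using \<open>X \<noteq> {}\<close> \<open>\<not> card X \<ge> 5\<close> by (auto simp: Suc_le_eq card_gt_0_iff)
  have "card {y\<in>V - X. E x y} \<ge> 5 - card X" if "x \<in> X" for x
  proof -
    have "{y\<in>V. E x y} \<subseteq> (X - {x}) \<union> {y\<in>V - X. E x y}"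
      using assms(1) unfolding simple_graph_def by auto
    then have "card {y\<in>V. E x y} \<le> card ((X - {x}) \<union> {y\<in>V - X. E x y})"
      using \<open>finite X\<close> \<open>finite V\<close> by (intro card_mono) auto
    also have "\<dots> \<le> card (X - {x}) + card {y\<in>V - X. E x y}" by (rule card_Un_le)
    also have "card (X - {x}) = card X - 1" using that \<open>finite X\<close> by simp
    finally have "card {y\<in>V. E x y} \<le> card X - 1 + card {y\<in>V - X. E x y}" .
    moreover have "card {y\<in>V. E x y} \<ge> 4" using deg that assms(4) unfolding degree_def by auto
    ultimately show ?thesis using \<open>1 \<le> card X\<close> by linarith
  qed
  then have "card X * (5 - card X) \<le> (\<Sum>x\<in>X. card {y\<in>V - X. E x y})"
    using sum_mono[of X "\<lambda>_. 5 - card X"] by simp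
  also have "\<dots> = card (cut_edges V E X)"
  proof -
    have "cut_edges V E X = Sigma X (\<lambda>x. {y\<in>V - X. E x y})" unfolding cut_edges_def by auto
    then show ?thesis using \<open>finite X\<close> \<open>finite V\<close> by (simp add: card_SigmaI)
  qed
  finally have "card X * (5 - card X) \<le> 3" using cut by simp
  moreover have "card X = 1 \<or> card X = 2 \<or> card X = 3 \<or> card X = 4"
    using \<open>1 \<le> card X\<close> \<open>card X \<le> 4\<close> by linarith
  ultimately show False by auto
qed

definition absorb :: "'a set \<Rightarrow> ('a \<Rightarrow> 'a \<Rightarrow> bool) \<Rightarrow> 'a set \<Rightarrow> 'a set" where
  "absorb V E W = W \<union> {v\<in>V - W. 4 \<le> card {w\<in>W. E v w}}"

lemma absorb_subset: "W \<subseteq> V \<Longrightarrow> absorb V E W \<subseteq> V"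
  unfolding absorb_def by auto

lemma in_S3_absorb:
  assumes "finite V" "W \<subseteq> V" "\<And>u. \<not> E u u" "\<And>x y. E x y \<Longrightarrow> E y x"
    and "in_S3 W (induced_subgraph W E)"
  shows "in_S3 (absorb V E W) (induced_subgraph (absorb V E W) E)"
  unfolding absorb_def
  using assms by (intro in_S3_induced_union) (auto intro: finite_subset)

lemma simple_graph_compl_graph:
  assumes "simple_graph V E"
  shows "simple_graph V (compl_graph V E)"
  using assms unfolding simple_graph_def compl_graph_def by auto

lemma subset_absorb_compl:
  assumes G: "simple_graph V E" and "X \<subseteq> V" and cut: "card (cut_edges V E X) \<le> 3"
    and "B \<subseteq> V - X" "card B = 13"
  shows "X \<subseteq> absorb V (compl_graph V E) (W \<union> B)"
proof
  fix x assume "x \<in> X"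
  have "finite V" using G unfolding simple_graph_def by simp
  have cross: "card {y\<in>V - X. E x y} \<le> 3"
    using card_out_neighbours_le_cut[where E = E, OF \<open>finite V\<close> \<open>X \<subseteq> V\<close> \<open>x \<in> X\<close>] cut by simp
  have "B - {y\<in>V - X. E x y} \<subseteq> {w\<in>W \<union> B. compl_graph V E x w}"
    using \<open>x \<in> X\<close> assms(2,4) unfolding compl_graph_def by auto
  moreover have "finite {w\<in>W \<union> B. compl_graph V E x w}"
    using \<open>finite V\<close> by (rule finite_subset[rotated]) (auto simp: compl_graph_def)
  ultimately have "card (B - {y\<in>V - X. E x y}) \<le> card {w\<in>W \<union> B. compl_graph V E x w}"
    by (intro card_mono)
  moreover have "card B - card {y\<in>V - X. E x y} \<le> card (B - {y\<in>V - X. E x y})"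
    by (rule diff_card_le_card_Diff) (use \<open>finite V\<close> in auto)
  ultimately show "x \<in> absorb V (compl_graph V E) (W \<union> B)"
    using cross \<open>x \<in> X\<close> assms(2,5) unfolding absorb_def by auto
qed

lemma card_neighbours_outside_absorb_compl:
  assumes G: "simple_graph V E" and "u \<in> V - absorb V (compl_graph V E) W"
    and "X \<subseteq> W" "W \<subseteq> V"
  shows "card X - 3 \<le> card {x\<in>X. E x u}"
proof -
  have "finite V" using G unfolding simple_graph_def by simp
  then have "finite X" using assms(3,4) by (auto intro: finite_subset)
  have "card {w\<in>W. compl_graph V E u w} \<le> 3" "u \<notin> X"
    using assms(2,3) unfolding absorb_def by auto
  moreover have "card {x\<in>X. compl_graph V E u x} \<le> card {w\<in>W. compl_graph V E u w}"
    using \<open>finite V\<close> assms(3,4) by (intro card_mono) (auto intro: finite_subset)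
  moreover have "X \<subseteq> {x\<in>X. compl_graph V E u x} \<union> {x\<in>X. E x u}"
    using G assms \<open>u \<notin> X\<close> unfolding simple_graph_def compl_graph_def by auto
  then have "card X \<le> card ({x\<in>X. compl_graph V E u x} \<union> {x\<in>X. E x u})"
    using \<open>finite X\<close> by (intro card_mono) auto
  moreover note card_Un_le[of "{x\<in>X. compl_graph V E u x}" "{x\<in>X. E x u}"]
  ultimately show ?thesis by linarith
qed

lemma induced_subgraph_same: "(\<And>u v. E u v \<Longrightarrow> u \<in> V \<and> v \<in> V) \<Longrightarrow> induced_subgraph V E = E"
  unfolding induced_subgraph_def by (auto intro!: ext)

lemma in_S3_induced_compl_5_13:
  assumes G: "simple_graph V E" and "A \<subseteq> V" "B \<subseteq> V" "A \<inter> B = {}" "card A = 5" "card B = 13"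
    and nonadj: "\<forall>a\<in>A. \<forall>b\<in>B. \<not> E a b"
  shows "in_S3 (A \<union> B) (induced_subgraph (A \<union> B) (compl_graph V E))"
proof -
  let ?C = "compl_graph V E"
  have "finite A" "finite B"
    using G assms(2,3) unfolding simple_graph_def by (auto intro: rev_finite_subset)
  then have "in_S3 (A \<union> B) (complete_bipartite A B)"
    using assms(4-6) by (rule in_S3_complete_bipartite_5_13)
  then show ?thesis
  proof (rule in_S3_mono[rotated])
    show "finite (A \<union> B)" using \<open>finite A\<close> \<open>finite B\<close> by simp
    show "complete_bipartite A B v u" if "complete_bipartite A B u v" for u v
      using that unfolding complete_bipartite_def by blast
    show "induced_subgraph (A \<union> B) ?C u v" if "complete_bipartite A B u v" for u v
      using that nonadj G assms(2-4) unfolding complete_bipartite_def induced_subgraph_def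
        compl_graph_def simple_graph_def by blast
    show "u \<in> A \<union> B \<and> v \<in> A \<union> B \<and> u \<noteq> v \<and> induced_subgraph (A \<union> B) ?C v u"
      if "induced_subgraph (A \<union> B) ?C u v" for u v
      using that simple_graph_compl_graph[OF G]
      unfolding induced_subgraph_def simple_graph_def by blast
  qed
qed

lemma compl_in_S3_if_nonadjacent_5_13:
  assumes G: "simple_graph V E" and degc: "\<forall>v\<in>V. degree V (compl_graph V E) v \<ge> 4"
    and "X \<subseteq> V" and cut: "card (cut_edges V E X) \<le> 3" and "card X \<ge> 5"
    and "A \<subseteq> X" "B \<subseteq> V - X" "card A = 5" "card B = 13" "\<forall>a\<in>A. \<forall>b\<in>B. \<not> E a b"
  shows "in_S3 V (compl_graph V E)"
proof -
  let ?C = "compl_graph V E"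
  have "finite V" using G unfolding simple_graph_def by simp
  have C: "\<And>u. \<not> ?C u u" "\<And>x y. ?C x y \<Longrightarrow> ?C y x" "\<And>x y. ?C x y \<Longrightarrow> x \<in> V \<and> y \<in> V"
    using simple_graph_compl_graph[OF G] unfolding simple_graph_def by blast+
  define W1 where "W1 = absorb V ?C (A \<union> B)"
  define W2 where "W2 = absorb V ?C W1"
  have "A \<union> B \<subseteq> V" using assms(3,6,7) by blast
  then have "W1 \<subseteq> V" unfolding W1_def by (rule absorb_subset)
  then have "W2 \<subseteq> V" unfolding W2_def by (rule absorb_subset)
  have "in_S3 (A \<union> B) (induced_subgraph (A \<union> B) ?C)"
    using assms(3,6-10) by (intro in_S3_induced_compl_5_13[OF G]) auto
  then have S2: "in_S3 W2 (induced_subgraph W2 ?C)"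
    unfolding W2_def W1_def using \<open>finite V\<close> \<open>A \<union> B \<subseteq> V\<close> \<open>W1 \<subseteq> V\<close> C
    by (intro in_S3_absorb) (auto simp flip: W1_def)
  have "X \<subseteq> W1"
    unfolding W1_def by (rule subset_absorb_compl[OF G assms(3) cut assms(7,9)])
  moreover have "W1 \<subseteq> W2" unfolding W2_def absorb_def by blast
  ultimately have outside: "u \<in> V - X" if "u \<in> V - W2" for u using that by blast
  \<comment> \<open>A vertex missed by both rounds has at least \<open>card X - 3 \<ge> 2\<close> neighbours in \<open>X\<close>
    in \<open>G\<close>, so two such vertices would need four cut edges.\<close>
  have "u = u'" if "u \<in> V - W2" "u' \<in> V - W2" for u u'
  proof (rule ccontr)
    assume "u \<noteq> u'"
    have many: "card X - 3 \<le> card {x\<in>X. E x w}" if "w \<in> V - W2" for w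
      using card_neighbours_outside_absorb_compl[OF G _ \<open>X \<subseteq> W1\<close> \<open>W1 \<subseteq> V\<close>] that
      unfolding W2_def by blast
    show False
      using card_in_neighbours_le_cut[OF \<open>finite V\<close> \<open>X \<subseteq> V\<close> outside[OF that(1)] outside[OF that(2)]
          \<open>u \<noteq> u'\<close>, of E] many[OF that(1)] many[OF that(2)] cut \<open>card X \<ge> 5\<close>
      by linarith
  qed
  then have "{w\<in>W2. ?C t w} = {w\<in>V. ?C t w}" if "t \<in> V - W2" for t
    using that C(1,3) by blast
  then have "in_S3 (W2 \<union> (V - W2)) (induced_subgraph (W2 \<union> (V - W2)) ?C)"
    using \<open>finite V\<close> \<open>W2 \<subseteq> V\<close> C(1,2) S2 degc
    by (intro in_S3_induced_union) (auto simp: degree_def intro: rev_finite_subset)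
  then show ?thesis
    using \<open>W2 \<subseteq> V\<close> induced_subgraph_same[of ?C V] C(3) by (simp add: Un_absorb1)
qed

lemma exists_nonadjacent_5_13:
  assumes G: "simple_graph V E" and "X \<subseteq> V" and cut: "card (cut_edges V E X) \<le> 3"
    and "card X \<ge> 5" "card X \<le> card (V - X)" "card V \<ge> 26"
  obtains A B where "A \<subseteq> X" "B \<subseteq> V - X" "card A = 5" "card B = 13" "\<forall>a\<in>A. \<forall>b\<in>B. \<not> E a b"
proof -
  have "finite V" using G unfolding simple_graph_def by simp
  let ?C = "cut_edges V E X"
  have "finite ?C" using finite_cut_edges[OF \<open>finite V\<close> \<open>X \<subseteq> V\<close>] .
  then have "card (fst ` ?C) \<le> 3" "card (snd ` ?C) \<le> 3"
    using card_image_le[OF \<open>finite ?C\<close>, of fst] card_image_le[OF \<open>finite ?C\<close>, of snd] cut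
    by linarith+
  have ends: "x \<in> fst ` ?C" "y \<in> snd ` ?C" if "x \<in> X" "y \<in> V - X" "E x y" for x y
    using that unfolding cut_edges_def by force+
  have "card X \<le> card V" "card (V - X) = card V - card X"
    using \<open>finite V\<close> \<open>X \<subseteq> V\<close> by (simp_all add: card_mono card_Diff_subset rev_finite_subset)
  then have "card V = card X + card (V - X)" by linarith
  have large: "card (S - M) \<ge> n" if "card S \<ge> n + 3" "card M \<le> 3" "finite M" for S M :: "'a set" and n
    using diff_card_le_card_Diff[OF that(3), of S] that(1,2) by linarith
  show thesis
  proof (cases "card X \<ge> 8")
    case True
    then have "5 \<le> card (X - fst ` ?C)"
      using large[of 5 X "fst ` ?C"] \<open>finite ?C\<close> \<open>card (fst ` ?C) \<le> 3\<close> by simp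
    then obtain A where A: "A \<subseteq> X - fst ` ?C" "card A = 5" by (meson obtain_subset_with_card_n)
    have "13 \<le> card (V - X)"
      using \<open>card V = card X + card (V - X)\<close> assms(5,6) by linarith
    then obtain B where B: "B \<subseteq> V - X" "card B = 13" by (meson obtain_subset_with_card_n)
    show thesis
    proof (rule that[OF _ B(1) A(2) B(2)])
      show "A \<subseteq> X" using A(1) by blast
      show "\<forall>a\<in>A. \<forall>b\<in>B. \<not> E a b" using A(1) B(1) ends(1) by blast
    qed
  next
    case False
    then have "13 \<le> card ((V - X) - snd ` ?C)"
      using large[of 13 "V - X" "snd ` ?C"] \<open>finite ?C\<close> \<open>card (snd ` ?C) \<le> 3\<close>
        \<open>card V = card X + card (V - X)\<close> assms(6) by simp
    then obtain B where B: "B \<subseteq> (V - X) - snd ` ?C" "card B = 13" by (meson obtain_subset_with_card_n)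
    obtain A where A: "A \<subseteq> X" "card A = 5"
      using assms(4) by (meson obtain_subset_with_card_n)
    show thesis
    proof (rule that[OF A(1) _ A(2) B(2)])
      show "B \<subseteq> V - X" using B(1) by blast
      show "\<forall>a\<in>A. \<forall>b\<in>B. \<not> E a b" using A(1) B(1) ends(2) by blast
    qed
  qed
qed

lemma smaller_side_of_small_cut:
  assumes sym: "\<And>u v. E u v \<Longrightarrow> E v u" and "has_edge_cut_at_most V E k"
  obtains S where "S \<subseteq> V" "card (cut_edges V E S) \<le> k" "S \<noteq> {}" "card S \<le> card (V - S)"
proof -
  obtain X where X: "X \<noteq> {}" "X \<subset> V" "card (cut_edges V E X) \<le> k"
    using assms(2) unfolding has_edge_cut_at_most_def by blast
  show thesis
  proof (cases "card X \<le> card (V - X)")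
    case True
    then show thesis using X that by blast
  next
    case False
    moreover have "V - (V - X) = X" "V - X \<noteq> {}" using X(2) by blast+
    moreover have "card (cut_edges V E (V - X)) \<le> k"
      using X card_cut_edges_complement[where E = E and X = X and V = V] sym by auto
    ultimately show thesis using that[of "V - X"] by auto
  qed
qed

lemma min_degree_le_degree: "finite V \<Longrightarrow> v \<in> V \<Longrightarrow> min_degree V E \<le> degree V E v"
  unfolding min_degree_def by simp

theorem mainTheorem15:
  fixes V :: "'a set" and E :: "'a \<Rightarrow> 'a \<Rightarrow> bool"
  assumes "simple_graph V E"
    and "min (min_degree V E) (min_degree V (compl_graph V E)) \<ge> 4"
    and "card V \<ge> 26"
    and "has_edge_cut_at_most V E 3"
  shows "in_S3 V (compl_graph V E)"
proof -
  have "finite V" and sym: "\<And>u v. E u v \<Longrightarrow> E v u"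
    using assms(1) unfolding simple_graph_def by auto
  have deg: "\<forall>v\<in>V. degree V E v \<ge> 4" "\<forall>v\<in>V. degree V (compl_graph V E) v \<ge> 4"
    using assms(2) min_degree_le_degree[OF \<open>finite V\<close>] by (meson le_trans min.boundedE)+
  obtain S where S: "S \<subseteq> V" "card (cut_edges V E S) \<le> 3" "S \<noteq> {}" "card S \<le> card (V - S)"
    using smaller_side_of_small_cut[OF sym assms(4)] by blast
  then have "card S \<ge> 5"
    using card_side_of_small_cut[OF assms(1) deg(1)] by blast
  then obtain A B where "A \<subseteq> S" "B \<subseteq> V - S" "card A = 5" "card B = 13" "\<forall>a\<in>A. \<forall>b\<in>B. \<not> E a b"
    using exists_nonadjacent_5_13[OF assms(1) S(1,2) _ S(4) assms(3)] by blast
  then show ?thesis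
    using compl_in_S3_if_nonadjacent_5_13[OF assms(1) deg(2) S(1,2) \<open>card S \<ge> 5\<close>] by blast
qed

end
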